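(* Let $n\ge 1$ be an integer, and suppose that $A,B,C\subseteq\mathbb{Z}_5^n$ satisfy $(A+B)\cap C=\emptyset$, where $A+B=\{a+b:a\in A,b\in B\}$. If $\min\{|A|,|B|\}>2\cdot5^{n-1}$ and $C\ne\emptyset$, then $|A|+|B|+2|C|\le 6\cdot5^{n-1}$.
   Context: $\mathbb{Z}_5^n$ denotes the elementary abelian $5$-group of rank $n$. *)

theory Defs
  imports "HOL-Analysis.Analysis" "HOL-Library.Numeral_Type"
begin

text \<open>The elementary abelian group Z_5^n is rendered as the vector type 5 ^ 'n,
  where 5 is the ring of integers mod 5 (Numeral_Type) and the index type 'n is
  a finite type with CARD('n) = n (so n >= 1 automatically).\<close>

definition sumset :: "'a::plus set \<Rightarrow> 'a set \<Rightarrow> 'a set" where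
  "sumset A B = {a + b | a b. a \<in> A \<and> b \<in> B}"

end

theory Submission
  imports Defs "HOL-Computational_Algebra.Primes"
begin

(* Hamidoune's isoperimetric method. Fix B and consider the nonempty X with X + B a proper
   subset; call X a fragment if it minimises |X + B| - |X|, and an atom if it is a fragment of
   least size. Submodularity of X |-> |X + B| shows that two atoms that meet coincide, so the
   atom through 0 is a subgroup H, and |A + B| >= |A| + |H + B| - |H|.
   In a group of order p^(n+1), H is proper, so |H| divides p^n; and H + B is a union of
   H-cosets, so |B| > m p^n forces |H + B| >= m p^n + |H|, i.e. |A + B| >= |A| + m p^n.
   For Z_5^n with m = 2, applied to A and to B, and C inside the complement of A + B, this gives
   the bound. *)

lemma sumset_commute: "sumset A B = sumset B (A :: 'a::ab_semigroup_add set)"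
  unfolding sumset_def by (metis add.commute)

lemma sumset_mono_left: "X \<subseteq> Y \<Longrightarrow> sumset X B \<subseteq> sumset Y B"
  unfolding sumset_def by blast

lemma sumset_Un_left: "sumset (X \<union> Y) B = sumset X B \<union> sumset Y B"
  unfolding sumset_def by blast

lemma sumset_Int_left_subset: "sumset (X \<inter> Y) B \<subseteq> sumset X B \<inter> sumset Y B"
  unfolding sumset_def by blast

lemma sumset_translate_left:
  "sumset ((+) g ` X) B = (+) g ` sumset X (B :: 'a::semigroup_add set)"
proof -
  have "sumset ((+) g ` X) B = {(g + a) + b | a b. a \<in> X \<and> b \<in> B}"
    unfolding sumset_def by blast
  also have "\<dots> = {g + (a + b) | a b. a \<in> X \<and> b \<in> B}"
    by (simp only: add.assoc)
  also have "\<dots> = (+) g ` sumset X B"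
    unfolding sumset_def by blast
  finally show ?thesis .
qed

lemma card_le_card_sumset_left:
  fixes X B :: "'a::{cancel_semigroup_add,finite} set"
  assumes "B \<noteq> {}"
  shows "card X \<le> card (sumset X B)"
proof -
  obtain b where "b \<in> B" using assms by blast
  have "card X = card ((\<lambda>x. x + b) ` X)"
    by (simp add: card_image inj_on_def)
  also have "\<dots> \<le> card (sumset X B)"
    using \<open>b \<in> B\<close> by (intro card_mono) (auto simp: sumset_def)
  finally show ?thesis .
qed

lemma sumset_reflected_complement_subset:
  fixes X B :: "'a::ab_group_add set"
  shows "sumset (uminus ` (- sumset X B)) B \<subseteq> uminus ` (- X)"
proof
  fix z assume "z \<in> sumset (uminus ` (- sumset X B)) B"
  then obtain w b where "w \<notin> sumset X B" "b \<in> B" "z = - w + b"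
    unfolding sumset_def by blast
  then have "w - b \<notin> X" "z = - (w - b)"
    unfolding sumset_def by (force, simp)
  then show "z \<in> uminus ` (- X)" by blast
qed

definition add_subgroup :: "'a::group_add set \<Rightarrow> bool" where
  "add_subgroup H \<longleftrightarrow> 0 \<in> H \<and> (\<forall>x\<in>H. \<forall>y\<in>H. x - y \<in> H)"

lemma add_subgroup_add:
  assumes "add_subgroup H" and "x \<in> H" and "y \<in> H"
  shows "x + y \<in> H"
proof -
  have "0 - y \<in> H" using assms unfolding add_subgroup_def by blast
  then have "x - (0 - y) \<in> H" using assms unfolding add_subgroup_def by blast
  then show ?thesis by simp
qed

lemma sumset_add_subgroup_right_subset:
  fixes H B :: "'a::ab_group_add set"
  assumes "add_subgroup H"
  shows "sumset (sumset H B) H \<subseteq> sumset H B"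
proof
  fix z assume "z \<in> sumset (sumset H B) H"
  then obtain h b h' where "h \<in> H" "b \<in> B" "h' \<in> H" "z = (h + b) + h'"
    unfolding sumset_def by blast
  moreover have "z = (h + h') + b"
    using calculation by (simp add: ac_simps)
  moreover have "h + h' \<in> H" using add_subgroup_add[OF assms] calculation by blast
  ultimately show "z \<in> sumset H B"
    unfolding sumset_def by blast
qed

lemma sumset_Diff_coset_subset:
  fixes H X :: "'a::ab_group_add set"
  assumes H: "add_subgroup H" and X: "sumset X H \<subseteq> X"
  shows "sumset (X - (+) x ` H) H \<subseteq> X - (+) x ` H"
proof
  fix z assume "z \<in> sumset (X - (+) x ` H) H"
  then obtain y h where y: "y \<in> X" "y \<notin> (+) x ` H" and h: "h \<in> H" and z: "z = y + h"
    unfolding sumset_def by blast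
  have "z \<notin> (+) x ` H"
  proof
    assume "z \<in> (+) x ` H"
    then obtain h' where "h' \<in> H" "y + h = x + h'" unfolding z by blast
    then have "y = x + (h' - h)" "h' - h \<in> H"
      using H h unfolding add_subgroup_def by (metis add_diff_cancel add_diff_eq, blast)
    then show False using y(2) by blast
  qed
  moreover have "z \<in> X" using X y(1) h z unfolding sumset_def by blast
  ultimately show "z \<in> X - (+) x ` H" by blast
qed

lemma card_add_subgroup_dvd_card:
  fixes H X :: "'a::{ab_group_add,finite} set"
  assumes H: "add_subgroup H" and X: "sumset X H \<subseteq> X"
  shows "card H dvd card X"
  using X
proof (induction "card X" arbitrary: X rule: less_induct)
  case (less X)
  show ?case
  proof (cases "X = {}")
    case False
    then obtain x where "x \<in> X" by blast
    have "(+) x ` H \<subseteq> X" using less.prems \<open>x \<in> X\<close> unfolding sumset_def by blast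
    then have card_X: "card X = card (X - (+) x ` H) + card H"
      using card_Diff_subset[of "(+) x ` H" X] card_mono[of X "(+) x ` H"]
      by (simp add: card_image)
    moreover have "0 < card H"
      using H unfolding add_subgroup_def by (auto simp: card_gt_0_iff)
    ultimately have "card H dvd card (X - (+) x ` H)"
      using less.hyps sumset_Diff_coset_subset[OF H less.prems] by simp
    then show ?thesis using card_X by simp
  qed simp
qed

lemma add_le_of_dvd_less:
  fixes a b d :: nat
  assumes "d dvd a" and "d dvd b" and "a < b"
  shows "a + d \<le> b"
  using dvd_imp_le[of d "b - a"] assms by simp

locale sumset_atoms =
  fixes B :: "'a::{ab_group_add,finite} set"
  assumes B_nonempty: "B \<noteq> {}"
begin

definition admissible :: "'a set \<Rightarrow> bool" where
  "admissible X \<longleftrightarrow> X \<noteq> {} \<and> sumset X B \<noteq> UNIV"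

definition connectivity :: nat where
  "connectivity = (LEAST k. \<exists>X. admissible X \<and> card (sumset X B) = card X + k)"

definition fragment :: "'a set \<Rightarrow> bool" where
  "fragment X \<longleftrightarrow> admissible X \<and> card (sumset X B) = card X + connectivity"

definition atom :: "'a set \<Rightarrow> bool" where
  "atom X \<longleftrightarrow> fragment X \<and> (\<forall>Y. fragment Y \<longrightarrow> card X \<le> card Y)"

lemma card_add_connectivity_le:
  assumes "admissible X"
  shows "card X + connectivity \<le> card (sumset X B)"
proof -
  obtain k where k: "card (sumset X B) = card X + k"
    using card_le_card_sumset_left[OF B_nonempty] le_Suc_ex by blast
  then have "connectivity \<le> k"
    unfolding connectivity_def using assms by (intro Least_le) blast
  then show ?thesis using k by simp
qed

lemma fragment_exists:
  assumes "admissible X"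
  shows "\<exists>Y. fragment Y"
proof -
  have "\<exists>k Y. admissible Y \<and> card (sumset Y B) = card Y + k"
    using assms card_le_card_sumset_left[OF B_nonempty] le_Suc_ex by blast
  then have "\<exists>Y. admissible Y \<and> card (sumset Y B) = card Y + connectivity"
    unfolding connectivity_def by (rule LeastI_ex)
  then show ?thesis
    unfolding fragment_def by blast
qed

lemma atom_exists:
  assumes "admissible X"
  shows "\<exists>Y. atom Y"
  using ex_has_least_nat[of fragment _ card] fragment_exists[OF assms]
  unfolding atom_def by blast

lemma fragment_translate:
  assumes "fragment X"
  shows "fragment ((+) g ` X)"
proof -
  have "(+) g ` sumset X B \<noteq> UNIV"
  proof -
    obtain z where "z \<notin> sumset X B"
      using assms unfolding fragment_def admissible_def by blast
    then have "g + z \<notin> (+) g ` sumset X B"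
      by (simp add: inj_image_mem_iff inj_def)
    then show ?thesis by blast
  qed
  then show ?thesis
    using assms by (simp add: fragment_def admissible_def sumset_translate_left card_image)
qed

lemma atom_translate: "atom X \<Longrightarrow> atom ((+) g ` X)"
  by (simp add: atom_def fragment_translate card_image)

lemma atom_card_bound:
  assumes "atom X"
  shows "2 * card X + connectivity \<le> CARD('a)"
proof -
  have XB: "card (sumset X B) = card X + connectivity" "sumset X B \<noteq> UNIV" "X \<noteq> {}"
    using assms unfolding atom_def fragment_def admissible_def by auto
  have card_XB_le: "card (sumset X B) \<le> CARD('a)"
    by (rule card_mono) auto
  \<comment> \<open>The reflected complement of X + B is again a fragment, and X is no larger.\<close>
  define Y where "Y = uminus ` (- sumset X B)"
  have card_Y: "card Y = CARD('a) - card (sumset X B)"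
    unfolding Y_def by (simp add: card_image Compl_eq_Diff_UNIV card_Diff_subset)
  have "card (sumset Y B) \<le> card (uminus ` (- X))"
    unfolding Y_def by (intro card_mono sumset_reflected_complement_subset) simp
  also have "\<dots> = CARD('a) - card X"
    by (simp add: card_image Compl_eq_Diff_UNIV card_Diff_subset)
  finally have card_YB: "card (sumset Y B) \<le> CARD('a) - card X" .
  have "0 < card X" "0 < CARD('a)"
    using XB(3) by (simp_all add: card_gt_0_iff)
  then have "card (sumset Y B) < CARD('a)"
    using card_YB by linarith
  then have "sumset Y B \<noteq> UNIV" by auto
  moreover have "Y \<noteq> {}" using XB(2) unfolding Y_def by blast
  ultimately have "admissible Y" unfolding admissible_def by blast
  then have "fragment Y"
    using card_add_connectivity_le[of Y] XB(1) card_XB_le card_Y card_YB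
    unfolding fragment_def by linarith
  then have "card X \<le> card Y" using assms unfolding atom_def by blast
  then show ?thesis using XB(1) card_XB_le card_Y by linarith
qed

lemma fragment_Int:
  assumes X: "fragment X" and Y: "fragment Y" and XY: "X \<inter> Y \<noteq> {}"
    and XY_B: "sumset (X \<union> Y) B \<noteq> UNIV"
  shows "fragment (X \<inter> Y)"
proof -
  have "admissible (X \<inter> Y)"
    using X XY sumset_mono_left[of "X \<inter> Y" X B]
    unfolding fragment_def admissible_def by blast
  then have I: "card (X \<inter> Y) + connectivity \<le> card (sumset (X \<inter> Y) B)"
    by (rule card_add_connectivity_le)
  have "admissible (X \<union> Y)"
    using XY XY_B unfolding admissible_def by blast
  then have U: "card (X \<union> Y) + connectivity \<le> card (sumset X B \<union> sumset Y B)"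
    using card_add_connectivity_le[of "X \<union> Y"] by (simp add: sumset_Un_left)
  have "card (sumset (X \<inter> Y) B) \<le> card (sumset X B \<inter> sumset Y B)"
    by (rule card_mono[OF _ sumset_Int_left_subset]) simp
  then show ?thesis
    using I U X Y card_Un_Int[of X Y] card_Un_Int[of "sumset X B" "sumset Y B"]
    \<open>admissible (X \<inter> Y)\<close> unfolding fragment_def by simp
qed

lemma atom_Int_eq:
  assumes X: "atom X" and Y: "atom Y" and XY: "X \<inter> Y \<noteq> {}"
  shows "X = Y"
proof -
  have card_eq: "card X = card Y"
    using X Y unfolding atom_def by (simp add: le_antisym)
  have "sumset (X \<union> Y) B \<noteq> UNIV"
  proof
    assume "sumset (X \<union> Y) B = UNIV"
    then have "card (sumset X B \<union> sumset Y B) = CARD('a)"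
      by (simp add: sumset_Un_left)
    moreover have "admissible (X \<inter> Y)"
      using X XY sumset_mono_left[of "X \<inter> Y" X B]
      unfolding atom_def fragment_def admissible_def by blast
    then have "card (X \<inter> Y) + connectivity \<le> card (sumset X B \<inter> sumset Y B)"
      using card_add_connectivity_le card_mono[OF _ sumset_Int_left_subset[of X Y B]]
      by (meson finite le_trans)
    moreover have "card (X \<inter> Y) > 0"
      using XY by (simp add: card_gt_0_iff)
    ultimately show False
      using X Y card_eq atom_card_bound[OF X]
        card_Un_Int[of "sumset X B" "sumset Y B", OF finite finite]
      unfolding atom_def fragment_def by linarith
  qed
  then have "fragment (X \<inter> Y)"
    using X Y XY fragment_Int unfolding atom_def by blast
  then have "card X \<le> card (X \<inter> Y)" "card Y \<le> card (X \<inter> Y)"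
    using X Y unfolding atom_def by blast+
  then have "X \<inter> Y = X" "X \<inter> Y = Y"
    using card_seteq[OF finite Int_lower1] card_seteq[OF finite Int_lower2] by blast+
  then show ?thesis by simp
qed

lemma atom_add_subgroup:
  assumes "atom H" and "0 \<in> H"
  shows "add_subgroup H"
  unfolding add_subgroup_def
proof (intro conjI ballI)
  fix x y assume "x \<in> H" "y \<in> H"
  have "0 \<in> (+) (- y) ` H"
    using \<open>y \<in> H\<close> by (intro image_eqI[of _ _ y]) simp_all
  then have "(+) (- y) ` H = H"
    using atom_Int_eq[OF atom_translate[OF assms(1)] assms(1)] assms(2) by blast
  moreover have "- y + x \<in> (+) (- y) ` H"
    using \<open>x \<in> H\<close> by blast
  ultimately show "x - y \<in> H" by simp
qed fact

lemma atom_with_zero_exists: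
  assumes "admissible X"
  shows "\<exists>H. atom H \<and> 0 \<in> H"
proof -
  obtain Y where "atom Y" using atom_exists[OF assms] ..
  moreover obtain y where "y \<in> Y"
    using \<open>atom Y\<close> unfolding atom_def fragment_def admissible_def by blast
  moreover have "0 \<in> (+) (- y) ` Y"
    using \<open>y \<in> Y\<close> by (intro image_eqI[of _ _ y]) simp_all
  ultimately show ?thesis
    using atom_translate[OF \<open>atom Y\<close>, of "- y"] by blast
qed

end

lemma card_sumset_ge_add_subgroup:
  fixes A B :: "'a::{ab_group_add,finite} set"
  assumes "A \<noteq> {}" and "B \<noteq> {}" and "sumset A B \<noteq> UNIV"
  obtains H where "add_subgroup H" and "sumset H B \<noteq> UNIV"
    and "card (sumset H B) + card A \<le> card (sumset A B) + card H"
proof -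
  interpret sumset_atoms B using assms(2) by unfold_locales
  have "admissible A" using assms(1,3) unfolding admissible_def by blast
  then obtain H where "atom H" "0 \<in> H" using atom_with_zero_exists by blast
  then have "fragment H" unfolding atom_def by blast
  show thesis
  proof (rule that)
    show "add_subgroup H" using atom_add_subgroup[OF \<open>atom H\<close> \<open>0 \<in> H\<close>] .
    show "sumset H B \<noteq> UNIV"
      using \<open>fragment H\<close> unfolding fragment_def admissible_def by blast
    show "card (sumset H B) + card A \<le> card (sumset A B) + card H"
      using \<open>fragment H\<close> card_add_connectivity_le[OF \<open>admissible A\<close>]
      unfolding fragment_def by linarith
  qed
qed

lemma card_sumset_ge_prime_power:
  fixes A B :: "'a::{ab_group_add,finite} set"
  assumes p: "prime p" and card_UNIV: "CARD('a) = p ^ Suc n"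
    and A: "A \<noteq> {}" and AB: "sumset A B \<noteq> UNIV" and B: "m * p ^ n < card B"
  shows "card A + m * p ^ n \<le> card (sumset A B)"
proof -
  have "B \<noteq> {}" using B by auto
  then obtain H where H: "add_subgroup H" and HB: "sumset H B \<noteq> UNIV"
    and le: "card (sumset H B) + card A \<le> card (sumset A B) + card H"
    using card_sumset_ge_add_subgroup[OF A _ AB] by blast
  have "H \<noteq> {}" using H unfolding add_subgroup_def by blast
  have "card H \<le> card (sumset H B)"
    using card_le_card_sumset_left[OF \<open>B \<noteq> {}\<close>] .
  also have "\<dots> < p ^ Suc n"
    using HB psubset_card_mono[of UNIV "sumset H B"] card_UNIV by auto
  finally have "card H < p ^ Suc n" .
  moreover have "card H dvd p ^ Suc n"
    using card_add_subgroup_dvd_card[OF H, of UNIV] card_UNIV by simp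
  then obtain i where "i \<le> Suc n" "card H = p ^ i"
    using divides_primepow_nat[OF p] by blast
  moreover from this have "i \<noteq> Suc n"
    using \<open>card H < p ^ Suc n\<close> by auto
  ultimately have "card H dvd p ^ n"
    by (simp add: le_Suc_eq le_imp_power_dvd)
  then have "card H dvd m * p ^ n" by simp
  moreover have "card H dvd card (sumset H B)"
    using card_add_subgroup_dvd_card[OF H sumset_add_subgroup_right_subset[OF H]] .
  moreover have "card B \<le> card (sumset H B)"
    using card_le_card_sumset_left[OF \<open>H \<noteq> {}\<close>, of B] by (simp add: sumset_commute)
  ultimately have "m * p ^ n + card H \<le> card (sumset H B)"
    using B by (intro add_le_of_dvd_less) simp_all
  then show ?thesis using le by linarith
qed

theorem lemma2:
  fixes A B C :: "(5 ^ 'n) set"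
  assumes "sumset A B \<inter> C = {}"
    and "min (card A) (card B) > 2 * 5 ^ (CARD('n) - 1)"
    and "C \<noteq> {}"
  shows "card A + card B + 2 * card C \<le> 6 * 5 ^ (CARD('n) - 1)"
proof -
  define m where "m = CARD('n) - 1"
  have card_UNIV: "CARD(5 ^ 'n) = 5 ^ Suc m"
    unfolding m_def by simp
  have A: "A \<noteq> {}" and B: "B \<noteq> {}" and AB: "sumset A B \<noteq> UNIV"
    using assms by auto
  have "card A + 2 * 5 ^ m \<le> card (sumset A B)"
    using card_sumset_ge_prime_power[of 5, OF _ card_UNIV A AB] assms(2)
    unfolding m_def by simp
  moreover have "card B + 2 * 5 ^ m \<le> card (sumset A B)"
    using card_sumset_ge_prime_power[of 5, OF _ card_UNIV B] AB assms(2)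
    unfolding m_def by (simp add: sumset_commute[of A])
  moreover have "card (sumset A B) + card C \<le> 5 ^ Suc m"
    using assms(1) card_Un_disjoint[of "sumset A B" C] card_mono[of UNIV "sumset A B \<union> C"]
    card_UNIV by simp
  ultimately show ?thesis
    unfolding m_def[symmetric] by simp
qed

end
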